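(* Let $m\equiv 0\pmod 3$ be a positive integer and let $\mathcal Z$ be a three-class symmetric association scheme of order $3m^2$ with adjacency matrices $A_0=I,A_1,A_2,A_3$. Then the following are equivalent: (1) the character table (first eigenmatrix) of $\mathcal Z$ is $$P=\begin{bmatrix}1&m(m-1)&m(m+1)&(m-1)(m+1)\\1&m&0&-m-1\\1&0&-m&m-1\\1&-m&m&-1\end{bmatrix};$$ (2) $\mathcal Z$ is self-dual and $$A_1^3=m^2A_1+\tfrac13m^2(m-1)(m-2)J,\quad A_2^3=m^2A_2+\tfrac13m^2(m+1)(m+2)J,\quad (A_3+I)^3=m^2(A_3+I)+\tfrac13m^2(m-1)(m+1)J.$$
   Context: A three-class symmetric association scheme is a partition of $X\times X$ into relations $R_0=\{(x,x)\},R_1,R_2,R_3$ whose symmetric $0/1$ adjacency matrices satisfy $A_0=I$, $\sum A_i=J$ (all-ones matrix) and $A_iA_j=\sum_h p_{ij}^hA_h$ for constants $p_{ij}^h$. Its Bose–Mesner algebra (span of the $A_i$) has primitive idempotents $E_0=\frac1{|X|}J,E_1,E_2,E_3$; writing $A_j=\sum_i p_j(i)E_i$ and $E_i=\frac1{|X|}\sum_j q_i(j)A_j$, the first eigenmatrix (character table) is $P$ with $P_{ij}=p_j(i)$ and the second eigenmatrix is $Q$ with $Q_{ij}=q_j(i)$ (for a suitable ordering of the idempotents). The scheme is (formally) self-dual if $P=Q$. *)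

theory Defs
  imports "HOL-Analysis.Analysis"
begin

text \<open>Square real matrices indexed by the finite point set 'a (the type).
  A three-class scheme is given by its four adjacency matrices A 0, ..., A 3.\<close>

definition allones :: "real^'a::finite^'a" where
  "allones = (\<chi> i j. 1)"

definition sym_assoc_scheme3 :: "(nat \<Rightarrow> real^'a::finite^'a) \<Rightarrow> bool" where
  "sym_assoc_scheme3 A \<longleftrightarrow>
     A 0 = mat 1 \<and>
     (\<forall>i<4. \<forall>x y. A i $ x $ y = 0 \<or> A i $ x $ y = 1) \<and>
     (\<forall>i<4. transpose (A i) = A i) \<and>
     (\<forall>i<4. A i \<noteq> 0) \<and>
     (\<Sum>i<4. A i) = allones \<and>
     (\<forall>i<4. \<forall>j<4. \<exists>p::nat \<Rightarrow> real. A i ** A j = (\<Sum>h<4. p h *\<^sub>R A h))"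

definition bm_prim_idempotents ::
  "(nat \<Rightarrow> real^'a::finite^'a) \<Rightarrow> (nat \<Rightarrow> real^'a^'a) \<Rightarrow> bool" where
  "bm_prim_idempotents A E \<longleftrightarrow>
     (\<forall>i<4. E i \<in> span (A ` {..<4})) \<and>
     E 0 = (1 / real CARD('a)) *\<^sub>R allones \<and>
     (\<forall>i<4. \<forall>j<4. E i ** E j = (if i = j then E i else 0)) \<and>
     (\<forall>i<4. E i \<noteq> 0) \<and>
     (\<Sum>i<4. E i) = mat 1"

text \<open>P i j = p_j(i): A_j = sum_i p_j(i) E_i.\<close>
definition first_eigenmatrix ::
  "(nat \<Rightarrow> real^'a::finite^'a) \<Rightarrow> (nat \<Rightarrow> real^'a^'a) \<Rightarrow> (nat \<Rightarrow> nat \<Rightarrow> real) \<Rightarrow> bool" where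
  "first_eigenmatrix A E P \<longleftrightarrow> (\<forall>j<4. A j = (\<Sum>i<4. P i j *\<^sub>R E i))"

text \<open>Q i j = q_j(i): E_i = (1/|X|) sum_j q_i(j) A_j.\<close>
definition second_eigenmatrix ::
  "(nat \<Rightarrow> real^'a::finite^'a) \<Rightarrow> (nat \<Rightarrow> real^'a^'a) \<Rightarrow> (nat \<Rightarrow> nat \<Rightarrow> real) \<Rightarrow> bool" where
  "second_eigenmatrix A E Q \<longleftrightarrow>
     (\<forall>i<4. E i = (1 / real CARD('a)) *\<^sub>R (\<Sum>j<4. Q j i *\<^sub>R A j))"

definition char_table_m :: "real \<Rightarrow> nat \<Rightarrow> nat \<Rightarrow> real" where
  "char_table_m m i j =
     [[1, m*(m-1), m*(m+1), (m-1)*(m+1)],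
      [1, m, 0, -m-1],
      [1, 0, -m, m-1],
      [1, -m, m, -1]] ! i ! j"

definition self_dual :: "(nat \<Rightarrow> real^'a::finite^'a) \<Rightarrow> bool" where
  "self_dual A \<longleftrightarrow> (\<exists>E P Q. bm_prim_idempotents A E \<and> first_eigenmatrix A E P \<and>
       second_eigenmatrix A E Q \<and> (\<forall>i<4. \<forall>j<4. P i j = Q i j))"

end

theory Submission
  imports Defs
begin

text \<open>Everything is read off the action of the adjacency matrices on the primitive idempotents,
  \<open>A\<^sub>j E\<^sub>l = p\<^sub>j(l) E\<^sub>l\<close>. A cube identity \<open>B\<^sup>3 = m\<^sup>2 B + c J\<close> then says that every
  eigenvalue of \<open>B\<close> is a root of \<open>x\<^sup>3 = m\<^sup>2 x\<close>, except on \<open>E\<^sub>0\<close> where \<open>J\<close> contributes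
  \<open>c |X|\<close>; there the cubic has a unique real root, which fixes the first row of \<open>P\<close>, and all
  other entries lie in \<open>{-m, 0, m}\<close> (shifted by \<open>-1\<close> in the last column). Self-duality turns
  \<open>P Q = |X| I\<close> into \<open>P\<^sup>2 = 3m\<^sup>2 I\<close>; the entries of this identity in the first row, together
  with one diagonal entry and a row sum, leave only the stated table. Conversely the stated
  table satisfies \<open>P\<^sup>2 = 3m\<^sup>2 I\<close>, so \<open>Q = P\<close> is the second eigenmatrix.\<close>

lemma matrix_add_rdistrib: "((A::'r::semiring_1^'n^'m) + B) ** C = A ** C + B ** C"
  by (vector matrix_matrix_mult_def sum.distrib[symmetric] field_simps)

lemma matrix_sum_rdistrib:
  "sum (f :: 'i \<Rightarrow> 'r::semiring_1^'n^'m) S ** (C::'r^'p^'n) = (\<Sum>i\<in>S. f i ** C)"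
  by (induction S rule: infinite_finite_induct) (simp_all add: matrix_add_rdistrib)

lemma matrix_sum_ldistrib:
  "(C::'r::semiring_1^'n^'m) ** sum (f :: 'i \<Rightarrow> 'r^'p^'n) S = (\<Sum>i\<in>S. C ** f i)"
  by (induction S rule: infinite_finite_induct) (simp_all add: matrix_add_ldistrib)

lemma matrix_scaleR_mult: "(k *\<^sub>R (A::real^'n^'m)) ** B = k *\<^sub>R (A ** B)"
  by (simp add: scalar_matrix_assoc)

lemma lessThan_4: "{..<4::nat} = {0, 1, 2, 3}"
  by auto

lemma less_4_cases: "(i::nat) < 4 \<Longrightarrow> i = 0 \<or> i = 1 \<or> i = 2 \<or> i = 3"
  by auto

lemma cubic_root_unique:
  fixes x r \<mu> :: real
  assumes "x ^ 3 = \<mu> * x + (r ^ 3 - \<mu> * r)" "4 * \<mu> < 3 * r ^ 2"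
  shows "x = r"
proof -
  have "(x - r) * (x ^ 2 + r * x + r ^ 2 - \<mu>) = 0"
    using assms(1) by algebra
  moreover have "4 * (x ^ 2 + r * x + r ^ 2 - \<mu>) = (2 * x + r) ^ 2 + (3 * r ^ 2 - 4 * \<mu>)"
    by algebra
  then have "x ^ 2 + r * x + r ^ 2 - \<mu> > 0"
    using assms(2) by (smt (verit) zero_le_power2)
  ultimately show ?thesis by simp
qed

lemma cubic_root_unique_sq:
  fixes x r m :: real
  assumes "x ^ 3 = m ^ 2 * x + (r ^ 3 - m ^ 2 * r)" "m > 0" "r \<ge> 2 * m"
  shows "x = r"
proof (rule cubic_root_unique[OF assms(1)])
  have "4 * m ^ 2 \<le> r ^ 2"
    using power_mono[of "2 * m" r 2] assms(2,3) by (simp add: power_mult_distrib)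
  moreover have "m ^ 2 > 0"
    using assms(2) by simp
  ultimately show "4 * m ^ 2 < 3 * r ^ 2"
    by linarith
qed

lemma cube_eq_sq_mult_iff:
  fixes x m :: real
  shows "x ^ 3 = m ^ 2 * x \<longleftrightarrow> x = - m \<or> x = 0 \<or> x = m"
proof -
  have "x ^ 3 - m ^ 2 * x = x * (x - m) * (x + m)"
    by algebra
  then show ?thesis by (smt (verit) mult_eq_0_iff)
qed

definition diagonalised_by :: "real^'a::finite^'a \<Rightarrow> (nat \<Rightarrow> real^'a^'a) \<Rightarrow> (nat \<Rightarrow> real) \<Rightarrow> bool"
  where "diagonalised_by B E b \<longleftrightarrow> (\<forall>l<4. B ** E l = b l *\<^sub>R E l)"

context
  fixes A E :: "nat \<Rightarrow> real^'a::finite^'a"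
  assumes idem: "bm_prim_idempotents A E"
begin

lemma idempotent_mult: "i < 4 \<Longrightarrow> j < 4 \<Longrightarrow> E i ** E j = (if i = j then E i else 0)"
  using idem unfolding bm_prim_idempotents_def by blast

lemma idempotent_nonzero: "l < 4 \<Longrightarrow> E l \<noteq> 0"
  using idem unfolding bm_prim_idempotents_def by simp

lemma allones_mult_idempotent:
  assumes "l < 4"
  shows "allones ** E l = (if l = 0 then real CARD('a) else 0) *\<^sub>R E l"
proof -
  have J: "allones = real CARD('a) *\<^sub>R E 0"
    using idem unfolding bm_prim_idempotents_def by simp
  show ?thesis
    unfolding J using assms by (simp add: matrix_scaleR_mult idempotent_mult)
qed

lemma matrix_eq_iff_mult_idempotents: "X = Y \<longleftrightarrow> (\<forall>l<4. X ** E l = Y ** E l)"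
proof
  assume "\<forall>l<4. X ** E l = Y ** E l"
  moreover have "(\<Sum>l<4. E l) = mat 1"
    using idem unfolding bm_prim_idempotents_def by blast
  ultimately show "X = Y"
    by (metis (no_types, lifting) lessThan_iff matrix_mul_rid matrix_sum_ldistrib sum.cong)
qed simp

lemma diagonalised_by_first_eigenmatrix:
  assumes "first_eigenmatrix A E P" "j < 4"
  shows "diagonalised_by (A j) E (\<lambda>l. P l j)"
  unfolding diagonalised_by_def
proof (intro allI impI)
  fix l :: nat assume l: "l < 4"
  have "A j ** E l = (\<Sum>i<4. P i j *\<^sub>R (E i ** E l))"
    using assms unfolding first_eigenmatrix_def by (simp add: matrix_sum_rdistrib matrix_scaleR_mult)
  also have "\<dots> = (\<Sum>i<4. if i = l then P l j *\<^sub>R E l else 0)"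
    using l by (intro sum.cong) (auto simp: idempotent_mult)
  also have "\<dots> = P l j *\<^sub>R E l"
    using l by simp
  finally show "A j ** E l = P l j *\<^sub>R E l" .
qed

lemma diagonalised_by_add_mat1:
  "diagonalised_by B E b \<Longrightarrow> diagonalised_by (B + mat 1) E (\<lambda>l. b l + 1)"
  by (simp add: diagonalised_by_def matrix_add_rdistrib scaleR_add_left)

lemma diagonalised_cube_iff:
  assumes B: "diagonalised_by B E b"
  shows "B ** B ** B = \<mu> *\<^sub>R B + c *\<^sub>R allones \<longleftrightarrow>
    (\<forall>l<4. b l ^ 3 = \<mu> * b l + (if l = 0 then c * real CARD('a) else 0))"
proof -
  have BX: "(X ** B) ** E l = b l *\<^sub>R (X ** E l)" if "l < 4" for X l
    using B that by (simp add: diagonalised_by_def matrix_mul_assoc[symmetric] matrix_scalar_ac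
        scalar_matrix_assoc)
  have "(B ** B ** B) ** E l = (b l ^ 3) *\<^sub>R E l" if "l < 4" for l
    using BX[OF that, of "B ** B"] BX[OF that, of B] B that
    by (simp add: diagonalised_by_def power3_eq_cube mult.assoc)
  moreover have "(\<mu> *\<^sub>R B + c *\<^sub>R allones) ** E l
      = (\<mu> * b l + (if l = 0 then c * real CARD('a) else 0)) *\<^sub>R E l" if "l < 4" for l
    using B that allones_mult_idempotent[OF that]
    by (simp add: matrix_add_rdistrib matrix_scaleR_mult diagonalised_by_def scaleR_add_left)
  ultimately show ?thesis
    by (simp add: matrix_eq_iff_mult_idempotents[of "B ** B ** B"] idempotent_nonzero)
qed

lemma first_eigenmatrix_col0:
  assumes "first_eigenmatrix A E P" "A 0 = mat 1" "l < 4"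
  shows "P l 0 = 1"
proof -
  have "P l 0 *\<^sub>R E l = 1 *\<^sub>R E l"
    using diagonalised_by_first_eigenmatrix[OF assms(1), of 0] assms(2,3)
    by (simp add: diagonalised_by_def)
  then show ?thesis
    using idempotent_nonzero[OF assms(3)] by (metis scaleR_cancel_right)
qed

lemma first_eigenmatrix_row_sum:
  assumes "first_eigenmatrix A E P" "(\<Sum>j<4. A j) = allones" "l < 4" "l \<noteq> 0"
  shows "(\<Sum>j<4. P l j) = 0"
proof -
  have "(\<Sum>j<4. P l j) *\<^sub>R E l = (\<Sum>j<4. A j ** E l)"
    using diagonalised_by_first_eigenmatrix[OF assms(1)] assms(3)
    by (simp add: scaleR_sum_left diagonalised_by_def)
  also have "\<dots> = allones ** E l"
    using assms(2) by (simp add: matrix_sum_rdistrib[symmetric])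
  also have "\<dots> = 0"
    using allones_mult_idempotent[OF assms(3)] assms(4) by simp
  finally show ?thesis
    using idempotent_nonzero[OF assms(3)] by simp
qed

lemma second_eigenmatrix_iff_orthogonal:
  assumes "first_eigenmatrix A E P"
  shows "second_eigenmatrix A E Q \<longleftrightarrow>
    (\<forall>i<4. \<forall>l<4. (\<Sum>j<4. P l j * Q j i) = (if i = l then real CARD('a) else 0))"
proof -
  define n where "n = real CARD('a)"
  have "n > 0"
    by (simp add: n_def)
  have "E i = (1 / n) *\<^sub>R (\<Sum>j<4. Q j i *\<^sub>R A j) \<longleftrightarrow>
      (\<forall>l<4. (\<Sum>j<4. P l j * Q j i) = (if i = l then n else 0))" if "i < 4" for i
  proof -
    have "((1 / n) *\<^sub>R (\<Sum>j<4. Q j i *\<^sub>R A j)) ** E l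
        = (1 / n) *\<^sub>R (\<Sum>j<4. (P l j * Q j i) *\<^sub>R E l)" if "l < 4" for l
      using diagonalised_by_first_eigenmatrix[OF assms] that
      by (simp add: matrix_scaleR_mult matrix_sum_rdistrib diagonalised_by_def mult.commute)
    then have "((1 / n) *\<^sub>R (\<Sum>j<4. Q j i *\<^sub>R A j)) ** E l
        = ((\<Sum>j<4. P l j * Q j i) / n) *\<^sub>R E l" if "l < 4" for l
      using that by (simp add: scaleR_sum_left[symmetric])
    moreover have "E i ** E l = (if i = l then 1 else 0) *\<^sub>R E l" if "l < 4" for l
      using idempotent_mult[OF \<open>i < 4\<close> that] by simp
    ultimately show ?thesis
      using \<open>n > 0\<close> idempotent_nonzero
      by (simp add: matrix_eq_iff_mult_idempotents[of "E i"] divide_eq_eq) auto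
  qed
  then show ?thesis
    unfolding second_eigenmatrix_def n_def[symmetric] by auto
qed

lemma cube_relation_eigenvalues:
  assumes B: "diagonalised_by B E b" and m: "m > 0" "r \<ge> 2 * m"
    and cube: "B ** B ** B = m ^ 2 *\<^sub>R B + c *\<^sub>R allones"
    and c: "c * real CARD('a) = r ^ 3 - m ^ 2 * r"
  shows "b 0 = r" and "l < 4 \<Longrightarrow> l \<noteq> 0 \<Longrightarrow> b l = - m \<or> b l = 0 \<or> b l = m"
proof -
  have "\<forall>l<4. b l ^ 3 = m ^ 2 * b l + (if l = 0 then r ^ 3 - m ^ 2 * r else 0)"
    using cube c unfolding diagonalised_cube_iff[OF B] by simp
  then show "b 0 = r" and "l < 4 \<Longrightarrow> l \<noteq> 0 \<Longrightarrow> b l = - m \<or> b l = 0 \<or> b l = m"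
    using cubic_root_unique_sq[OF _ m] cube_eq_sq_mult_iff by auto
qed

end

lemma column1_signs:
  fixes m s1 s2 s3 :: real
  assumes m: "m = 3 \<or> m \<ge> 6" and s: "s1 \<in> {-1, 0, 1}" "s2 \<in> {-1, 0, 1}" "s3 \<in> {-1, 0, 1}"
    and eq: "(m - 1) + (m * m - m) * s1 + (m * m + m) * s2 + (m * m - 1) * s3 = 0"
  shows "(s1 = 1 \<and> s2 = 0 \<and> s3 = -1) \<or> (m = 3 \<and> s1 = -1 \<and> s2 = 1 \<and> s3 = -1)"
  using m
proof
  assume "m = 3"
  with s eq show ?thesis by (elim insertE emptyE) simp_all
next
  assume m6: "m \<ge> 6"
  then have "m * m \<ge> 6 * m" by (simp add: mult_right_mono)
  with s eq m6 show ?thesis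
    by (elim insertE emptyE) (simp_all add: algebra_simps, linarith?)
qed

lemma column2_signs:
  fixes m s1 s2 s3 :: real
  assumes m: "m = 3 \<or> m \<ge> 6" and s: "s1 \<in> {-1, 0, 1}" "s2 \<in> {-1, 0, 1}" "s3 \<in> {-1, 0, 1}"
    and eq: "(m + 1) + (m * m - m) * s1 + (m * m + m) * s2 + (m * m - 1) * s3 = 0"
  shows "s1 = 0 \<and> s2 = -1 \<and> s3 = 1"
  using m
proof
  assume "m = 3"
  with s eq show ?thesis by (elim insertE emptyE) simp_all
next
  assume m6: "m \<ge> 6"
  then have "m * m \<ge> 6 * m" by (simp add: mult_right_mono)
  with s eq m6 show ?thesis
    by (elim insertE emptyE) (simp_all add: algebra_simps, linarith?)
qed

lemma column3_signs:
  fixes m s1 s2 s3 :: real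
  assumes m: "m = 3 \<or> m \<ge> 6" and s: "s1 \<in> {-1, 0, 1}" "s2 \<in> {-1, 0, 1}" "s3 \<in> {-1, 0, 1}"
    and eq: "(m * m - m) * s1 + (m * m + m) * s2 + (m * m - 1) * s3 = 2 * m"
  shows "(s1 = -1 \<and> s2 = 1 \<and> s3 = 0) \<or> (m = 3 \<and> s1 = 1 \<and> s2 = 0 \<and> s3 = 0)"
  using m
proof
  assume "m = 3"
  with s eq show ?thesis by (elim insertE emptyE) simp_all
next
  assume m6: "m \<ge> 6"
  then have "m * m \<ge> 6 * m" by (simp add: mult_right_mono)
  with s eq m6 show ?thesis
    by (elim insertE emptyE) (simp_all add: algebra_simps, linarith?)
qed

lemma char_table_m_orthogonal:
  fixes m :: real
  assumes "i < 4" "l < 4"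
  shows "(\<Sum>j<4. char_table_m m l j * char_table_m m j i) = (if i = l then 3 * m ^ 2 else 0)"
  using less_4_cases[OF assms(1)] less_4_cases[OF assms(2)]
  by (elim disjE) (simp_all add: lessThan_4 char_table_m_def algebra_simps power2_eq_square)

text \<open>For \<open>m = 3\<close> the column equations alone admit a second sign pattern in columns 1 and 3;
  the row sum and the diagonal entry exclude it.\<close>

lemma char_table_m_sign_solution:
  fixes m s1 s2 s3 t1 t2 t3 u1 u2 u3 :: real
  assumes m: "m = 3 \<or> m \<ge> 6"
    and s: "s1 \<in> {-1, 0, 1}" "s2 \<in> {-1, 0, 1}" "s3 \<in> {-1, 0, 1}"
    and t: "t1 \<in> {-1, 0, 1}" "t2 \<in> {-1, 0, 1}" "t3 \<in> {-1, 0, 1}"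
    and u: "u1 \<in> {-1, 0, 1}" "u2 \<in> {-1, 0, 1}" "u3 \<in> {-1, 0, 1}"
    and col1: "(m - 1) + (m * m - m) * s1 + (m * m + m) * s2 + (m * m - 1) * s3 = 0"
    and col2: "(m + 1) + (m * m - m) * t1 + (m * m + m) * t2 + (m * m - 1) * t3 = 0"
    and col3: "(m * m - m) * u1 + (m * m + m) * u2 + (m * m - 1) * u3 = 2 * m"
    and row_sum: "s1 + t1 + u1 = 0"
    and diag: "m * (m - 1) + m * m * s1 * s1 + m * m * t1 * s2 + (m * u1 - 1) * m * s3 = 3 * m * m"
  shows "s1 = 1 \<and> s2 = 0 \<and> s3 = -1 \<and> t1 = 0 \<and> t2 = -1 \<and> t3 = 1 \<and> u1 = -1 \<and> u2 = 1 \<and> u3 = 0"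
  using column1_signs[OF m s col1] column2_signs[OF m t col2] column3_signs[OF m u col3] row_sum diag
  by auto

lemma char_table_m_unique:
  fixes m :: real and P :: "nat \<Rightarrow> nat \<Rightarrow> real"
  assumes m: "m = 3 \<or> m \<ge> 6"
    and col0: "\<And>l. l < 4 \<Longrightarrow> P l 0 = 1"
    and row0: "P 0 1 = m * (m - 1)" "P 0 2 = m * (m + 1)" "P 0 3 = m * m - 1"
    and col1: "\<And>l. l < 4 \<Longrightarrow> l \<noteq> 0 \<Longrightarrow> P l 1 = - m \<or> P l 1 = 0 \<or> P l 1 = m"
    and col2: "\<And>l. l < 4 \<Longrightarrow> l \<noteq> 0 \<Longrightarrow> P l 2 = - m \<or> P l 2 = 0 \<or> P l 2 = m"
    and col3: "\<And>l. l < 4 \<Longrightarrow> l \<noteq> 0 \<Longrightarrow> P l 3 + 1 = - m \<or> P l 3 + 1 = 0 \<or> P l 3 + 1 = m"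
    and orth: "\<And>i l. i < 4 \<Longrightarrow> l < 4 \<Longrightarrow>
      (\<Sum>j<4. P l j * P j i) = (if i = l then 3 * m ^ 2 else 0)"
    and row_sum: "(\<Sum>j<4. P 1 j) = 0"
    and ij: "i < 4" "j < 4"
  shows "P i j = char_table_m m i j"
proof -
  have "m > 0"
    using m by auto
  define s where "s l = P l 1 / m" for l
  define t where "t l = P l 2 / m" for l
  define u where "u l = (P l 3 + 1) / m" for l
  have sign: "x / m \<in> {-1, 0, 1}" if "x = - m \<or> x = 0 \<or> x = m" for x
    using that \<open>m > 0\<close> by auto
  have entries: "P l 1 = m * s l" "P l 2 = m * t l" "P l 3 = m * u l - 1" for l
    using \<open>m > 0\<close> by (simp_all add: s_def t_def u_def)
  have "P 0 0 = 1" "P 1 0 = 1" "P 2 0 = 1" "P 3 0 = 1"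
    by (simp_all add: col0)
  note subs = this row0 entries[of 1] entries[of 2] entries[of 3]
  have "P 0 0 * P 0 1 + P 0 1 * P 1 1 + P 0 2 * P 2 1 + P 0 3 * P 3 1 = 0"
    "P 0 0 * P 0 2 + P 0 1 * P 1 2 + P 0 2 * P 2 2 + P 0 3 * P 3 2 = 0"
    "P 0 0 * P 0 3 + P 0 1 * P 1 3 + P 0 2 * P 2 3 + P 0 3 * P 3 3 = 0"
    "P 1 0 * P 0 1 + P 1 1 * P 1 1 + P 1 2 * P 2 1 + P 1 3 * P 3 1 = 3 * m ^ 2"
    "P 1 0 + P 1 1 + P 1 2 + P 1 3 = 0"
    using orth[of 1 0] orth[of 2 0] orth[of 3 0] orth[of 1 1] row_sum by (simp_all add: lessThan_4)
  then have "m * ((m - 1) + (m * m - m) * s 1 + (m * m + m) * s 2 + (m * m - 1) * s 3) = 0"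
    "m * ((m + 1) + (m * m - m) * t 1 + (m * m + m) * t 2 + (m * m - 1) * t 3) = 0"
    "m * ((m * m - m) * u 1 + (m * m + m) * u 2 + (m * m - 1) * u 3 - 2 * m) = 0"
    "m * (s 1 + t 1 + u 1) = 0"
    "m * (m - 1) + m * m * s 1 * s 1 + m * m * t 1 * s 2 + (m * u 1 - 1) * m * s 3 = 3 * m * m"
    unfolding subs by algebra+
  then have C: "(m - 1) + (m * m - m) * s 1 + (m * m + m) * s 2 + (m * m - 1) * s 3 = 0"
    "(m + 1) + (m * m - m) * t 1 + (m * m + m) * t 2 + (m * m - 1) * t 3 = 0"
    "(m * m - m) * u 1 + (m * m + m) * u 2 + (m * m - 1) * u 3 = 2 * m"
    "s 1 + t 1 + u 1 = 0"
    "m * (m - 1) + m * m * s 1 * s 1 + m * m * t 1 * s 2 + (m * u 1 - 1) * m * s 3 = 3 * m * m"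
    using \<open>m > 0\<close> by simp_all
  have S: "s 1 \<in> {-1, 0, 1}" "s 2 \<in> {-1, 0, 1}" "s 3 \<in> {-1, 0, 1}"
    "t 1 \<in> {-1, 0, 1}" "t 2 \<in> {-1, 0, 1}" "t 3 \<in> {-1, 0, 1}"
    "u 1 \<in> {-1, 0, 1}" "u 2 \<in> {-1, 0, 1}" "u 3 \<in> {-1, 0, 1}"
    unfolding s_def t_def u_def using sign col1 col2 col3 by simp_all
  have sol: "s 1 = 1 \<and> s 2 = 0 \<and> s 3 = -1 \<and> t 1 = 0 \<and> t 2 = -1 \<and> t 3 = 1 \<and>
      u 1 = -1 \<and> u 2 = 1 \<and> u 3 = 0"
    by (rule char_table_m_sign_solution[OF m S C])
  show ?thesis
    using less_4_cases[OF ij(1)] less_4_cases[OF ij(2)] sol subs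
    by (elim disjE) (simp_all add: char_table_m_def algebra_simps)
qed

lemma char_table_m_cube_eigenvalues:
  fixes m :: real
  assumes "l < 4"
  shows "char_table_m m l 1 ^ 3 = m ^ 2 * char_table_m m l 1
      + (if l = 0 then ((1/3) * m ^ 2 * (m - 1) * (m - 2)) * (3 * m ^ 2) else 0)"
    and "char_table_m m l 2 ^ 3 = m ^ 2 * char_table_m m l 2
      + (if l = 0 then ((1/3) * m ^ 2 * (m + 1) * (m + 2)) * (3 * m ^ 2) else 0)"
    and "(char_table_m m l 3 + 1) ^ 3 = m ^ 2 * (char_table_m m l 3 + 1)
      + (if l = 0 then ((1/3) * m ^ 2 * (m - 1) * (m + 1)) * (3 * m ^ 2) else 0)"
  using less_4_cases[OF assms]
  by (elim disjE; simp add: char_table_m_def power3_eq_cube power2_eq_square field_simps)+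

definition cube_identities :: "real \<Rightarrow> (nat \<Rightarrow> real^'a::finite^'a) \<Rightarrow> bool" where
  "cube_identities m A \<longleftrightarrow>
     A 1 ** A 1 ** A 1 = m ^ 2 *\<^sub>R A 1 + ((1/3) * m ^ 2 * (m - 1) * (m - 2)) *\<^sub>R allones \<and>
     A 2 ** A 2 ** A 2 = m ^ 2 *\<^sub>R A 2 + ((1/3) * m ^ 2 * (m + 1) * (m + 2)) *\<^sub>R allones \<and>
     (A 3 + mat 1) ** (A 3 + mat 1) ** (A 3 + mat 1) = m ^ 2 *\<^sub>R (A 3 + mat 1)
        + ((1/3) * m ^ 2 * (m - 1) * (m + 1)) *\<^sub>R allones"

lemma char_table_m_imp_self_dual_cube_identities:
  fixes A :: "nat \<Rightarrow> real^'a::finite^'a"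
  assumes idem: "bm_prim_idempotents A E" and P: "first_eigenmatrix A E (char_table_m m)"
    and card: "real CARD('a) = 3 * m ^ 2"
  shows "self_dual A \<and> cube_identities m A"
proof
  have "second_eigenmatrix A E (char_table_m m)"
    using second_eigenmatrix_iff_orthogonal[OF idem P] char_table_m_orthogonal card by simp
  then show "self_dual A"
    using idem P unfolding self_dual_def by blast
  have diag: "diagonalised_by (A 1) E (\<lambda>l. char_table_m m l 1)"
    "diagonalised_by (A 2) E (\<lambda>l. char_table_m m l 2)"
    "diagonalised_by (A 3 + mat 1) E (\<lambda>l. char_table_m m l 3 + 1)"
    using diagonalised_by_first_eigenmatrix[OF idem P]
      diagonalised_by_add_mat1[OF idem diagonalised_by_first_eigenmatrix[OF idem P]] by simp_all
  show "cube_identities m A"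
    unfolding cube_identities_def diagonalised_cube_iff[OF idem diag(1)]
      diagonalised_cube_iff[OF idem diag(2)] diagonalised_cube_iff[OF idem diag(3)] card
    using char_table_m_cube_eigenvalues by blast
qed

lemma cube_identities_eigenvalues:
  fixes A :: "nat \<Rightarrow> real^'a::finite^'a"
  assumes idem: "bm_prim_idempotents A E" and P: "first_eigenmatrix A E P"
    and cubes: "cube_identities m A" and card: "real CARD('a) = 3 * m ^ 2" and m: "m \<ge> 3"
  shows "P 0 1 = m * (m - 1)" "P 0 2 = m * (m + 1)" "P 0 3 = m * m - 1"
    and "\<And>l. l < 4 \<Longrightarrow> l \<noteq> 0 \<Longrightarrow> P l 1 = - m \<or> P l 1 = 0 \<or> P l 1 = m"
    and "\<And>l. l < 4 \<Longrightarrow> l \<noteq> 0 \<Longrightarrow> P l 2 = - m \<or> P l 2 = 0 \<or> P l 2 = m"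
    and "\<And>l. l < 4 \<Longrightarrow> l \<noteq> 0 \<Longrightarrow> P l 3 + 1 = - m \<or> P l 3 + 1 = 0 \<or> P l 3 + 1 = m"
proof -
  have "m > 0" and "m * m \<ge> 3 * m"
    using m by (auto intro: mult_right_mono)
  then have large: "m * (m - 1) \<ge> 2 * m" "m * (m + 1) \<ge> 2 * m" "m * m \<ge> 2 * m"
    by (simp_all add: algebra_simps)
  have c: "((1/3) * m ^ 2 * (m - 1) * (m - 2)) * real CARD('a) = (m * (m - 1)) ^ 3 - m ^ 2 * (m * (m - 1))"
    "((1/3) * m ^ 2 * (m + 1) * (m + 2)) * real CARD('a) = (m * (m + 1)) ^ 3 - m ^ 2 * (m * (m + 1))"
    "((1/3) * m ^ 2 * (m - 1) * (m + 1)) * real CARD('a) = (m * m) ^ 3 - m ^ 2 * (m * m)"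
    unfolding card by algebra+
  have diag: "diagonalised_by (A 1) E (\<lambda>l. P l 1)" "diagonalised_by (A 2) E (\<lambda>l. P l 2)"
    "diagonalised_by (A 3 + mat 1) E (\<lambda>l. P l 3 + 1)"
    using diagonalised_by_first_eigenmatrix[OF idem P]
      diagonalised_by_add_mat1[OF idem diagonalised_by_first_eigenmatrix[OF idem P]] by simp_all
  note cube = cubes[unfolded cube_identities_def]
  note e1 = cube_relation_eigenvalues[OF idem diag(1) \<open>m > 0\<close> large(1) cube[THEN conjunct1] c(1)]
  note e2 = cube_relation_eigenvalues[OF idem diag(2) \<open>m > 0\<close> large(2)
      cube[THEN conjunct2, THEN conjunct1] c(2)]
  note e3 = cube_relation_eigenvalues[OF idem diag(3) \<open>m > 0\<close> large(3)
      cube[THEN conjunct2, THEN conjunct2] c(3)]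
  show "P 0 1 = m * (m - 1)" "P 0 2 = m * (m + 1)" "P 0 3 = m * m - 1"
    "\<And>l. l < 4 \<Longrightarrow> l \<noteq> 0 \<Longrightarrow> P l 1 = - m \<or> P l 1 = 0 \<or> P l 1 = m"
    "\<And>l. l < 4 \<Longrightarrow> l \<noteq> 0 \<Longrightarrow> P l 2 = - m \<or> P l 2 = 0 \<or> P l 2 = m"
    "\<And>l. l < 4 \<Longrightarrow> l \<noteq> 0 \<Longrightarrow> P l 3 + 1 = - m \<or> P l 3 + 1 = 0 \<or> P l 3 + 1 = m"
    using e1 e2 e3 by auto
qed

lemma self_dual_cube_identities_imp_char_table_m:
  fixes A :: "nat \<Rightarrow> real^'a::finite^'a"
  assumes scheme: "sym_assoc_scheme3 A" and "self_dual A" and cubes: "cube_identities m A"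
    and card: "real CARD('a) = 3 * m ^ 2" and m: "m = 3 \<or> m \<ge> 6"
  shows "\<exists>E. bm_prim_idempotents A E \<and> first_eigenmatrix A E (char_table_m m)"
proof -
  obtain E P Q where idem: "bm_prim_idempotents A E" and P: "first_eigenmatrix A E P"
    and Q: "second_eigenmatrix A E Q" and PQ: "\<forall>i<4. \<forall>j<4. P i j = Q i j"
    using \<open>self_dual A\<close> unfolding self_dual_def by blast
  have "second_eigenmatrix A E P"
    using Q PQ unfolding second_eigenmatrix_def by (metis (no_types, lifting) lessThan_iff sum.cong)
  then have orth: "(\<Sum>j<4. P l j * P j i) = (if i = l then 3 * m ^ 2 else 0)"
    if "i < 4" "l < 4" for i l
    using second_eigenmatrix_iff_orthogonal[OF idem P] card that by simp
  have "A 0 = mat 1" and "(\<Sum>j<4. A j) = allones"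
    using scheme unfolding sym_assoc_scheme3_def by blast+
  have "P i j = char_table_m m i j" if "i < 4" "j < 4" for i j
    using char_table_m_unique[OF m first_eigenmatrix_col0[OF idem P \<open>A 0 = mat 1\<close>]
        cube_identities_eigenvalues[OF idem P cubes card] orth
        first_eigenmatrix_row_sum[OF idem P \<open>(\<Sum>j<4. A j) = allones\<close>, of 1] that] m
    by auto
  then have "first_eigenmatrix A E (char_table_m m)"
    using P unfolding first_eigenmatrix_def by (metis (no_types, lifting) lessThan_iff sum.cong)
  with idem show ?thesis by blast
qed

theorem lemma5p1:
  fixes A :: "nat \<Rightarrow> real^'a::finite^'a" and m :: nat
  assumes "m > 0" and "m mod 3 = 0"
    and "CARD('a) = 3 * m^2"
    and "sym_assoc_scheme3 A"
  shows "(\<exists>E. bm_prim_idempotents A E \<and> first_eigenmatrix A E (char_table_m (real m)))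
    \<longleftrightarrow>
    (self_dual A \<and>
     A 1 ** A 1 ** A 1 = (real m)^2 *\<^sub>R A 1
        + ((1/3) * (real m)^2 * (real m - 1) * (real m - 2)) *\<^sub>R allones \<and>
     A 2 ** A 2 ** A 2 = (real m)^2 *\<^sub>R A 2
        + ((1/3) * (real m)^2 * (real m + 1) * (real m + 2)) *\<^sub>R allones \<and>
     (A 3 + mat 1) ** (A 3 + mat 1) ** (A 3 + mat 1) = (real m)^2 *\<^sub>R (A 3 + mat 1)
        + ((1/3) * (real m)^2 * (real m - 1) * (real m + 1)) *\<^sub>R allones)"
proof -
  have card: "real CARD('a) = 3 * (real m) ^ 2"
    using assms(3) by simp
  \<comment> \<open>the only use of \<open>3 dvd m\<close>\<close>
  have "m = 3 \<or> m \<ge> 6"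
    using assms(1,2) by presburger
  then have "real m = 3 \<or> real m \<ge> 6"
    by auto
  then show ?thesis
    using char_table_m_imp_self_dual_cube_identities[OF _ _ card]
      self_dual_cube_identities_imp_char_table_m[OF assms(4) _ _ card]
    unfolding cube_identities_def by blast
qed

end
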